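(* Let $G$ be a free abelian group with a basis $E$, let $e\in E$, let $\check G$ be the subgroup generated by $E\setminus\{e\}$, and let $\lambda$ be the shift on $(G,e)^{\otimes\mathbb{Z}}$. Then (i) $\ker(\mathrm{id}-\lambda)=\mathbb{Z}e^{\otimes\mathbb{Z}}$; (ii) $(G,e)^{\otimes\mathbb{Z}}=(\mathrm{id}-\lambda)\big((G,e)^{\otimes\mathbb{Z}}\big)\oplus H(G,e)$ (internal direct sum). In particular, $H(G,e)$ is isomorphic to the cokernel of $\mathrm{id}-\lambda$.
   Context: $(G,e)^{\otimes\mathbb{Z}}$ is the inductive limit of $G\to G^{\otimes3}\to G^{\otimes5}\to\cdots$ (tensor products over $\mathbb{Z}$) with connecting maps $x\mapsto e\otimes x\otimes e$; equivalently it is the span of formal tensors $\bigotimes_{i\in\mathbb{Z}}x_i$ with $x_i\in G$ and $x_i=e$ for all but finitely many $i$. $e^{\otimes\mathbb{Z}}=\bigotimes_{i\in\mathbb{Z}}e$. The shift $\lambda$ is the automorphism with $\lambda(\bigotimes_i x_i)=\bigotimes_i x_{i-1}$. $\check G\otimes G^{\otimes\mathbb{N}}$ denotes the span of those $\bigotimes_i x_i$ with $x_0\in\check G$ and $x_i=e$ for all $i<0$, and $H(G,e):=\mathbb{Z}e^{\otimes\mathbb{Z}}+\check G\otimes G^{\otimes\mathbb{N}}$. *)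

theory Defs
  imports Main
begin

definition zspan :: "('a \<Rightarrow> int) set \<Rightarrow> ('a \<Rightarrow> int) set" where
  "zspan S = {f. \<exists>A c. finite A \<and> A \<subseteq> S \<and> f = (\<lambda>x. \<Sum>s\<in>A. c s * s x)}"

definition delta :: "'a \<Rightarrow> 'a \<Rightarrow> int" where
  "delta a = (\<lambda>b. if b = a then 1 else 0)"

text \<open>The free abelian group G with basis E = UNIV :: 'e set, as finitely supported functions.\<close>
definition Gfree :: "('e \<Rightarrow> int) set" where
  "Gfree = zspan (range delta)"

definition Gcheck :: "'e \<Rightarrow> ('e \<Rightarrow> int) set" where
  "Gcheck e = zspan (delta ` (UNIV - {e}))"

text \<open>Index sequences: basis elements of the restricted tensor product (all but finitely many entries e).\<close>
definition seqs :: "'e \<Rightarrow> (int \<Rightarrow> 'e) set" where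
  "seqs e = {w. finite {i. w i \<noteq> e}}"

definition adm :: "'e \<Rightarrow> (int \<Rightarrow> ('e \<Rightarrow> int)) \<Rightarrow> bool" where
  "adm e x \<longleftrightarrow> (\<forall>i. x i \<in> Gfree) \<and> finite {i. x i \<noteq> delta e}"

text \<open>The formal tensor of a family x, expanded multilinearly in the basis of (G,e)^(tensor Z).\<close>
definition tens :: "'e \<Rightarrow> (int \<Rightarrow> ('e \<Rightarrow> int)) \<Rightarrow> (int \<Rightarrow> 'e) \<Rightarrow> int" where
  "tens e x = (\<lambda>w. if w \<in> seqs e
       then (\<Prod>i\<in>{i. w i \<noteq> e \<or> x i \<noteq> delta e}. x i (w i)) else 0)"

definition TZ :: "'e \<Rightarrow> ((int \<Rightarrow> 'e) \<Rightarrow> int) set" where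
  "TZ e = zspan {tens e x | x. adm e x}"

definition etens :: "'e \<Rightarrow> (int \<Rightarrow> 'e) \<Rightarrow> int" where
  "etens e = tens e (\<lambda>i. delta e)"

text \<open>The shift: lambda(tensor_i x_i) = tensor_i x_(i-1); on coefficients (lambda c)(w) = c(i |-> w(i+1)).\<close>
definition shift :: "((int \<Rightarrow> 'e) \<Rightarrow> int) \<Rightarrow> ((int \<Rightarrow> 'e) \<Rightarrow> int)" where
  "shift c = (\<lambda>w. c (\<lambda>i. w (i + 1)))"

definition GcheckN :: "'e \<Rightarrow> ((int \<Rightarrow> 'e) \<Rightarrow> int) set" where
  "GcheckN e = zspan {tens e x | x. adm e x \<and> x 0 \<in> Gcheck e \<and> (\<forall>i<0. x i = delta e)}"

definition Hset :: "'e \<Rightarrow> ((int \<Rightarrow> 'e) \<Rightarrow> int) set" where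
  "Hset e = {(\<lambda>w. k * etens e w + h w) | k h. h \<in> GcheckN e}"

end

theory Submission
  imports Defs "HOL-Library.FuncSet"
begin

text \<open>
  Expanding formal tensors multilinearly identifies \<open>(G,e)\<^sup>\<otimes>\<^sup>\<int>\<close> with the finitely
  supported integer functions on index sequences \<open>w : \<int> \<rightarrow> E\<close> that equal \<open>e\<close> almost
  everywhere, and the shift permutes this basis. Its orbits are the constant sequence
  \<open>e\<^sup>\<otimes>\<^sup>\<int>\<close> and free \<open>\<int>\<close>-orbits, each containing exactly one normal sequence: the one whose
  first entry different from \<open>e\<close> sits at position \<open>0\<close>. On a free orbit \<open>id - \<lambda>\<close> is the
  difference operator on finitely supported functions \<open>\<int> \<rightarrow> \<int>\<close>, which is injective with
  cokernel \<open>\<int>\<close>, generated by any single point. Hence the kernel of \<open>id - \<lambda>\<close> is spanned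
  by \<open>e\<^sup>\<otimes>\<^sup>\<int>\<close>, and its image is complemented by the span of \<open>e\<^sup>\<otimes>\<^sup>\<int>\<close> and the basis elements
  at normal sequences, which is \<open>H(G,e)\<close>.
\<close>

section \<open>Integer spans and finite support\<close>

lemma zspan_zero: "(\<lambda>x. 0) \<in> zspan S"
  unfolding zspan_def by (rule CollectI, rule exI[of _ "{}"]) auto

lemma zspan_superset: "s \<in> S \<Longrightarrow> s \<in> zspan S"
  unfolding zspan_def by (rule CollectI, rule exI[of _ "{s}"], rule exI[of _ "\<lambda>_. 1"]) auto

lemma zspan_smult:
  assumes "f \<in> zspan S"
  shows "(\<lambda>x. k * f x) \<in> zspan S"
proof -
  from assms obtain A c where A: "finite A" "A \<subseteq> S" "f = (\<lambda>x. \<Sum>s\<in>A. c s * s x)"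
    unfolding zspan_def by blast
  show ?thesis unfolding zspan_def
    by (rule CollectI, rule exI[of _ A], rule exI[of _ "\<lambda>s. k * c s"])
       (simp add: A sum_distrib_left mult.assoc)
qed

lemma zspan_add:
  assumes "f \<in> zspan S" "g \<in> zspan S"
  shows "(\<lambda>x. f x + g x) \<in> zspan S"
proof -
  from assms(1) obtain A c where A: "finite A" "A \<subseteq> S" "f = (\<lambda>x. \<Sum>s\<in>A. c s * s x)"
    unfolding zspan_def by blast
  from assms(2) obtain B d where B: "finite B" "B \<subseteq> S" "g = (\<lambda>x. \<Sum>s\<in>B. d s * s x)"
    unfolding zspan_def by blast
  define c' where "c' s = (if s \<in> A then c s else 0) + (if s \<in> B then d s else 0)" for s
  have "f x + g x = (\<Sum>s\<in>A \<union> B. c' s * s x)" for x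
  proof -
    have "(\<Sum>s\<in>A \<union> B. c' s * s x) = (\<Sum>s\<in>A \<union> B. (if s \<in> A then c s * s x else 0))
          + (\<Sum>s\<in>A \<union> B. (if s \<in> B then d s * s x else 0))"
      unfolding c'_def sum.distrib[symmetric] by (rule sum.cong) (auto simp: distrib_right)
    also have "\<dots> = f x + g x"
      using A B by (simp only: sum.inter_restrict[symmetric] finite_UnI)
        (simp add: Int_absorb1 Int_absorb2 Un_Int_eq)
    finally show ?thesis by simp
  qed
  then show ?thesis unfolding zspan_def using A B by blast
qed

lemma zspan_sum:
  assumes "finite B" "\<And>b. b \<in> B \<Longrightarrow> g b \<in> zspan S"
  shows "(\<lambda>x. \<Sum>b\<in>B. k b * g b x) \<in> zspan S"
  using assms
proof (induction B rule: finite_induct)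
  case empty
  then show ?case by (simp add: zspan_zero)
next
  case (insert a B)
  have "(\<lambda>x. k a * g a x + (\<Sum>b\<in>B. k b * g b x)) \<in> zspan S"
    using insert by (intro zspan_add zspan_smult) auto
  then show ?case using insert by simp
qed

lemma zspan_mono: "S \<subseteq> T \<Longrightarrow> zspan S \<subseteq> zspan T"
  unfolding zspan_def by blast

lemma zspan_subset:
  assumes zero: "(\<lambda>x. 0) \<in> T"
    and step: "\<And>s k g. s \<in> S \<Longrightarrow> g \<in> T \<Longrightarrow> (\<lambda>x. k * s x + g x) \<in> T"
  shows "zspan S \<subseteq> T"
proof
  fix f assume "f \<in> zspan S"
  then obtain A c where A: "finite A" "A \<subseteq> S" "f = (\<lambda>x. \<Sum>s\<in>A. c s * s x)"
    unfolding zspan_def by blast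
  have "A \<subseteq> S \<Longrightarrow> (\<lambda>x. \<Sum>s\<in>A. c s * s x) \<in> T"
    using A(1) by (induction A rule: finite_induct) (simp_all add: zero step)
  then show "f \<in> T" using A by simp
qed

definition finsupp_on :: "'a set \<Rightarrow> ('a \<Rightarrow> int) set" where
  "finsupp_on A = {f. finite {x. f x \<noteq> 0} \<and> {x. f x \<noteq> 0} \<subseteq> A}"

lemma finsupp_on_zero: "(\<lambda>x. 0) \<in> finsupp_on A"
  by (simp add: finsupp_on_def)

lemma finsupp_on_add:
  assumes "f \<in> finsupp_on A" "g \<in> finsupp_on A"
  shows "(\<lambda>x. f x + g x) \<in> finsupp_on A"
proof -
  have sub: "{x. f x + g x \<noteq> 0} \<subseteq> {x. f x \<noteq> 0} \<union> {x. g x \<noteq> 0}" by auto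
  with assms show ?thesis unfolding finsupp_on_def using finite_subset[OF sub] by auto
qed

lemma finsupp_on_smult:
  assumes "f \<in> finsupp_on A"
  shows "(\<lambda>x. k * f x) \<in> finsupp_on A"
proof -
  have sub: "{x. k * f x \<noteq> 0} \<subseteq> {x. f x \<noteq> 0}" by auto
  with assms show ?thesis unfolding finsupp_on_def using finite_subset[OF sub] by auto
qed

lemma finsupp_on_diff:
  assumes "f \<in> finsupp_on A" "g \<in> finsupp_on A"
  shows "(\<lambda>x. f x - g x) \<in> finsupp_on A"
  using finsupp_on_add[OF assms(1) finsupp_on_smult[OF assms(2), of "-1"]] by simp

lemma delta_finsupp_on: "a \<in> A \<Longrightarrow> delta a \<in> finsupp_on A"
  by (simp add: finsupp_on_def delta_def)

lemma zspan_subset_finsupp_on: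
  assumes "S \<subseteq> finsupp_on A"
  shows "zspan S \<subseteq> finsupp_on A"
proof (rule zspan_subset)
  show "(\<lambda>x. 0) \<in> finsupp_on A" by (rule finsupp_on_zero)
next
  fix s k g assume "s \<in> S" "g \<in> finsupp_on A"
  with assms show "(\<lambda>x. k * s x + g x) \<in> finsupp_on A"
    by (intro finsupp_on_add finsupp_on_smult) auto
qed

lemma finsupp_on_eq_sum_delta:
  assumes "f \<in> finsupp_on A"
  shows "f = (\<lambda>x. \<Sum>a\<in>{a. f a \<noteq> 0}. f a * delta a x)"
proof
  fix x
  have "(\<Sum>a\<in>{a. f a \<noteq> 0}. f a * delta a x) = (\<Sum>a\<in>{a. f a \<noteq> 0}. if x = a then f a else 0)"
    by (rule sum.cong) (auto simp: delta_def)
  also have "\<dots> = f x" using assms by (simp add: finsupp_on_def sum.delta)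
  finally show "f x = (\<Sum>a\<in>{a. f a \<noteq> 0}. f a * delta a x)" by simp
qed

lemma finsupp_on_subset_zspan_delta: "finsupp_on A \<subseteq> zspan (delta ` A)"
proof
  fix f assume f: "f \<in> finsupp_on A"
  have "(\<lambda>x. \<Sum>a\<in>{a. f a \<noteq> 0}. f a * delta a x) \<in> zspan (delta ` A)"
    using f by (intro zspan_sum zspan_superset) (auto simp: finsupp_on_def)
  then show "f \<in> zspan (delta ` A)" using finsupp_on_eq_sum_delta[OF f] by simp
qed

lemma Gfree_finite_support:
  assumes "f \<in> Gfree"
  shows "finite {x. f x \<noteq> 0}"
proof -
  have "range delta \<subseteq> finsupp_on UNIV" by (auto intro: delta_finsupp_on)
  then have "Gfree \<subseteq> finsupp_on UNIV" unfolding Gfree_def by (rule zspan_subset_finsupp_on)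
  with assms show ?thesis unfolding finsupp_on_def by blast
qed

lemma delta_Gfree: "delta a \<in> Gfree"
  unfolding Gfree_def by (rule zspan_superset) simp

lemma delta_eq_delta_iff: "delta a = delta b \<longleftrightarrow> a = b"
  by (metis delta_def zero_neq_one)

lemma Gcheck_vanishes_at_e:
  assumes "f \<in> Gcheck e"
  shows "f e = 0"
proof -
  have "Gcheck e \<subseteq> {f. f e = 0}"
    unfolding Gcheck_def by (rule zspan_subset) (auto simp: delta_def)
  with assms show ?thesis by blast
qed

section \<open>Formal tensors as finitely supported functions\<close>

lemma tens_delta:
  assumes w: "w \<in> seqs e"
  shows "tens e (\<lambda>i. delta (w i)) = delta w"
proof
  fix v
  show "tens e (\<lambda>i. delta (w i)) v = delta w v"
  proof (cases "v \<in> seqs e")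
    case False
    then show ?thesis using w by (auto simp: tens_def delta_def)
  next
    case True
    let ?I = "{i. v i \<noteq> e \<or> delta (w i) \<noteq> delta e}"
    have I: "?I = {i. v i \<noteq> e} \<union> {i. w i \<noteq> e}" by (auto simp: delta_eq_delta_iff)
    have fin: "finite ?I" unfolding I using True w by (simp add: seqs_def)
    have agree: "(\<forall>i\<in>?I. v i = w i) \<longleftrightarrow> v = w"
    proof
      assume agree_on_I: "\<forall>i\<in>?I. v i = w i"
      show "v = w"
      proof
        fix i
        show "v i = w i"
        proof (cases "i \<in> ?I")
          case False
          then have "v i = e" "w i = e" using I by blast+
          then show ?thesis by simp
        qed (use agree_on_I in blast)
      qed
    qed simp
    have "(\<Prod>i\<in>?I. delta (w i) (v i)) = (\<Prod>i\<in>?I. if v i = w i then 1 else 0)"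
      by (rule prod.cong) (simp_all add: delta_def)
    also have "\<dots> = (if \<forall>i\<in>?I. v i = w i then 1 else 0)"
      using fin by (induction rule: finite_induct) simp_all
    also have "\<dots> = delta w v" by (simp only: agree) (simp add: delta_def)
    finally show ?thesis using True by (simp add: tens_def)
  qed
qed

lemma delta_seqs_adm: "w \<in> seqs e \<Longrightarrow> adm e (\<lambda>i. delta (w i))"
  unfolding adm_def seqs_def by (simp add: delta_eq_delta_iff delta_Gfree)

lemma tens_nonzeroD:
  assumes "adm e x" "tens e x w \<noteq> 0"
  shows "w \<in> seqs e" and "\<And>i. w i \<noteq> e \<or> x i \<noteq> delta e \<Longrightarrow> x i (w i) \<noteq> 0"
proof -
  show ws: "w \<in> seqs e" using assms(2) by (auto simp: tens_def split: if_splits)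
  fix i assume i: "w i \<noteq> e \<or> x i \<noteq> delta e"
  have fin: "finite {i. w i \<noteq> e \<or> x i \<noteq> delta e}"
    using ws assms(1) unfolding seqs_def adm_def Collect_disj_eq by simp
  have "(\<Prod>i\<in>{i. w i \<noteq> e \<or> x i \<noteq> delta e}. x i (w i)) \<noteq> 0"
    using assms(2) ws by (simp add: tens_def)
  with fin i show "x i (w i) \<noteq> 0" by (metis (mono_tags, lifting) mem_Collect_eq prod_zero_iff)
qed

text \<open>The support of a tensor embeds into the finite product of the supports of its
  factors different from \<open>e\<close>.\<close>
lemma tens_finsupp_on:
  assumes x: "adm e x"
  shows "tens e x \<in> finsupp_on (seqs e)"
proof -
  let ?S = "{i. x i \<noteq> delta e}"
  let ?extend = "\<lambda>f i. if i \<in> ?S then f i else e"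
  let ?P = "PiE ?S (\<lambda>i. {a. x i a \<noteq> 0})"
  have sub: "{w. tens e x w \<noteq> 0} \<subseteq> ?extend ` ?P"
  proof
    fix w assume "w \<in> {w. tens e x w \<noteq> 0}"
    then have nz: "\<And>i. w i \<noteq> e \<or> x i \<noteq> delta e \<Longrightarrow> x i (w i) \<noteq> 0"
      using tens_nonzeroD(2)[OF x] by blast
    have "w i = e" if "i \<notin> ?S" for i
      using nz[of i] that by (auto simp: delta_def)
    then have "w = ?extend (restrict w ?S)" by (intro ext) simp
    moreover have "restrict w ?S \<in> ?P" using nz by (simp add: PiE_iff)
    ultimately show "w \<in> ?extend ` ?P" by (rule image_eqI)
  qed
  have "finite ?P"
    using x Gfree_finite_support by (intro finite_PiE) (auto simp: adm_def)
  then have "finite {w. tens e x w \<noteq> 0}" using finite_subset[OF sub] by blast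
  then show ?thesis unfolding finsupp_on_def using tens_nonzeroD(1)[OF x] by blast
qed

lemma TZ_eq_finsupp_on: "TZ e = finsupp_on (seqs e)"
proof
  show "TZ e \<subseteq> finsupp_on (seqs e)"
    unfolding TZ_def by (rule zspan_subset_finsupp_on) (auto intro: tens_finsupp_on)
next
  have "delta ` seqs e \<subseteq> {tens e x | x. adm e x}"
  proof
    fix f assume "f \<in> delta ` seqs e"
    then obtain w where "w \<in> seqs e" "f = delta w" by blast
    then show "f \<in> {tens e x | x. adm e x}"
      by (intro CollectI exI[of _ "\<lambda>i. delta (w i)"]) (simp add: tens_delta delta_seqs_adm)
  qed
  then have "zspan (delta ` seqs e) \<subseteq> TZ e" unfolding TZ_def by (rule zspan_mono)
  then show "finsupp_on (seqs e) \<subseteq> TZ e" using finsupp_on_subset_zspan_delta by blast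
qed

lemma etens_eq_delta: "etens e = delta (\<lambda>_. e)"
  using tens_delta[of "\<lambda>_. e" e] by (simp add: etens_def seqs_def)

lemma etens_finsupp_on: "etens e \<in> finsupp_on (seqs e)"
  by (simp add: etens_eq_delta delta_finsupp_on seqs_def)

section \<open>Shift orbits and the kernel of \<open>id - \<lambda>\<close>\<close>

definition seq_shift :: "int \<Rightarrow> (int \<Rightarrow> 'e) \<Rightarrow> int \<Rightarrow> 'e" where
  "seq_shift n w = (\<lambda>i. w (i + n))"

lemma seq_shift_seq_shift: "seq_shift a (seq_shift b w) = seq_shift (a + b) w"
  by (simp add: seq_shift_def ac_simps)

lemma seq_shift_0 [simp]: "seq_shift 0 w = w"
  by (simp add: seq_shift_def)

lemma seq_shift_inverse: "seq_shift (- n) (seq_shift n w) = w"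
  by (simp add: seq_shift_seq_shift)

lemma inj_seq_shift: "inj (seq_shift n)"
  by (metis injI seq_shift_inverse)

lemma shift_apply: "shift c w = c (seq_shift 1 w)"
  by (simp add: shift_def seq_shift_def)

lemma seq_shift_in_seqs:
  assumes "w \<in> seqs e"
  shows "seq_shift n w \<in> seqs e"
proof -
  have "{i. seq_shift n w i \<noteq> e} = (\<lambda>j. j - n) ` {j. w j \<noteq> e}"
    by (auto simp: seq_shift_def image_iff intro!: exI[of _ "_ + n"])
  then show ?thesis using assms by (simp add: seqs_def)
qed

lemma seq_shift_in_seqs_iff: "seq_shift n w \<in> seqs e \<longleftrightarrow> w \<in> seqs e"
  by (metis seq_shift_in_seqs seq_shift_inverse)

lemma seq_shift_eq_const_iff: "seq_shift n w = (\<lambda>_. a) \<longleftrightarrow> w = (\<lambda>_. a)"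
proof -
  have "seq_shift m (\<lambda>_. a) = (\<lambda>_. a)" for m by (simp add: seq_shift_def)
  then show ?thesis by (metis seq_shift_inverse)
qed

text \<open>The unique representative of a non-constant shift orbit.\<close>
definition normal_seq :: "'e \<Rightarrow> (int \<Rightarrow> 'e) \<Rightarrow> bool" where
  "normal_seq e u \<longleftrightarrow> u \<in> seqs e \<and> u 0 \<noteq> e \<and> (\<forall>i<0. u i = e)"

lemma seqs_eq_seq_shift_normal:
  assumes "w \<in> seqs e" "w \<noteq> (\<lambda>_. e)"
  obtains u n where "normal_seq e u" "w = seq_shift n u"
proof -
  let ?M = "{i. w i \<noteq> e}"
  have fin: "finite ?M" using assms by (simp add: seqs_def)
  have ne: "?M \<noteq> {}" using assms(2) by auto
  define m where "m = Min ?M"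
  have "w m \<noteq> e" using Min_in[OF fin ne] by (simp add: m_def)
  moreover have "w i = e" if "i < m" for i using Min_le[OF fin, of i] that by (force simp: m_def)
  ultimately have "normal_seq e (seq_shift m w)"
    unfolding normal_seq_def using seq_shift_in_seqs[OF assms(1)] by (auto simp: seq_shift_def)
  moreover have "w = seq_shift (- m) (seq_shift m w)" by (simp add: seq_shift_seq_shift)
  ultimately show ?thesis by (rule that)
qed

lemma normal_seq_seq_shift_imp_0:
  assumes "normal_seq e u" "normal_seq e (seq_shift n u)"
  shows "n = 0"
proof (rule ccontr)
  assume "n \<noteq> 0"
  then consider "n > 0" | "n < 0" by linarith
  then show False
  proof cases
    case 1
    then have "seq_shift n u (- n) = e" using assms(2) unfolding normal_seq_def by simp
    then show False using assms(1) by (simp add: seq_shift_def normal_seq_def)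
  next
    case 2
    then have "seq_shift n u 0 = e" using assms(1) unfolding normal_seq_def by (simp add: seq_shift_def)
    then show False using assms(2) by (simp add: normal_seq_def)
  qed
qed

lemma inj_seq_shift_normal:
  assumes "normal_seq e u"
  shows "inj (\<lambda>n. seq_shift n u)"
proof (rule injI)
  fix a b assume "seq_shift a u = seq_shift b u"
  then have "seq_shift (- a) (seq_shift b u) = u" by (metis seq_shift_inverse)
  then have "normal_seq e (seq_shift (b - a) u)" using assms by (simp add: seq_shift_seq_shift)
  from normal_seq_seq_shift_imp_0[OF assms this] show "a = b" by simp
qed

lemma finite_orbit_support:
  assumes "c \<in> finsupp_on (seqs e)" "normal_seq e u"
  shows "finite {n. c (seq_shift n u) \<noteq> 0}"
proof -
  have "finite ((\<lambda>n. seq_shift n u) -` {v. c v \<noteq> 0})"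
    using assms(1) inj_seq_shift_normal[OF assms(2)] by (intro finite_vimageI) (simp_all add: finsupp_on_def)
  then show ?thesis by (simp add: vimage_def)
qed

lemma finite_support_const_steps_zero:
  fixes f :: "int \<Rightarrow> 'a::zero"
  assumes fin: "finite {n. f n \<noteq> 0}" and const_step: "\<And>j. j \<noteq> a \<Longrightarrow> f j = f (j + 1)"
  shows "f n = 0"
proof -
  have const_zero: "f b = 0" if S: "infinite S" and const: "\<And>j. j \<in> S \<Longrightarrow> f j = f b" for S b
  proof (rule ccontr)
    assume "f b \<noteq> 0"
    have "S \<subseteq> {n. f n \<noteq> 0}"
    proof
      fix j assume "j \<in> S"
      then have "f j = f b" by (rule const)
      with \<open>f b \<noteq> 0\<close> show "j \<in> {n. f n \<noteq> 0}" by simp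
    qed
    with fin S show False using finite_subset by blast
  qed
  have up: "f j = f (a + 1)" if "a + 1 \<le> j" for j
    using that
  proof (induction j rule: int_ge_induct)
    case (step i)
    then show ?case using const_step[of i] by simp
  qed simp
  have down: "f j = f a" if "j \<le> a" for j
    using that
  proof (induction j rule: int_le_induct)
    case (step i)
    then show ?case using const_step[of "i - 1"] by simp
  qed simp
  show ?thesis
  proof (cases "a + 1 \<le> n")
    case True
    have "f (a + 1) = 0"
    proof (rule const_zero)
      show "infinite {a + 1..}" by (rule infinite_Ici)
      show "\<And>j. j \<in> {a + 1..} \<Longrightarrow> f j = f (a + 1)" by (rule up) simp
    qed
    with up[OF True] show ?thesis by simp
  next
    case False
    have "f a = 0"
    proof (rule const_zero)
      show "infinite {..a}" by (rule infinite_Iic)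
      show "\<And>j. j \<in> {..a} \<Longrightarrow> f j = f a" by (rule down) simp
    qed
    with False down[of n] show ?thesis by simp
  qed
qed

definition id_minus_shift :: "((int \<Rightarrow> 'e) \<Rightarrow> int) \<Rightarrow> (int \<Rightarrow> 'e) \<Rightarrow> int" where
  "id_minus_shift c = (\<lambda>w. c w - shift c w)"

lemma id_minus_shift_seq_shift:
  "id_minus_shift c (seq_shift j u) = c (seq_shift j u) - c (seq_shift (j + 1) u)"
  by (simp add: id_minus_shift_def shift_apply seq_shift_seq_shift add.commute)

lemma id_minus_shift_zero: "id_minus_shift (\<lambda>w. 0) = (\<lambda>w. 0)"
  by (simp add: id_minus_shift_def shift_def)

lemma id_minus_shift_add: "id_minus_shift (\<lambda>w. a w + b w) = (\<lambda>w. id_minus_shift a w + id_minus_shift b w)"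
  by (simp add: id_minus_shift_def shift_def algebra_simps)

lemma id_minus_shift_diff: "id_minus_shift (\<lambda>w. a w - b w) = (\<lambda>w. id_minus_shift a w - id_minus_shift b w)"
  by (simp add: id_minus_shift_def shift_def algebra_simps)

lemma id_minus_shift_smult: "id_minus_shift (\<lambda>w. k * a w) = (\<lambda>w. k * id_minus_shift a w)"
  by (simp add: id_minus_shift_def shift_def algebra_simps)

lemma id_minus_shift_delta:
  "id_minus_shift (delta v) = (\<lambda>w. delta v w - delta (seq_shift (- 1) v) w)"
proof -
  have "seq_shift 1 w = v \<longleftrightarrow> w = seq_shift (- 1) v" for w
    by (metis minus_minus seq_shift_inverse)
  then show ?thesis by (simp add: id_minus_shift_def shift_apply delta_def)
qed

lemma id_minus_shift_finsupp_on:
  assumes c: "c \<in> finsupp_on (seqs e)"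
  shows "id_minus_shift c \<in> finsupp_on (seqs e)"
proof -
  have "finite (seq_shift 1 -` {v. c v \<noteq> 0})"
    using c inj_seq_shift by (intro finite_vimageI) (simp_all add: finsupp_on_def)
  moreover have "{w. shift c w \<noteq> 0} = seq_shift 1 -` {v. c v \<noteq> 0}"
    by (simp add: shift_apply vimage_def)
  moreover have "{w. shift c w \<noteq> 0} \<subseteq> seqs e"
    using c by (auto simp: finsupp_on_def shift_apply seq_shift_in_seqs_iff)
  ultimately have "shift c \<in> finsupp_on (seqs e)" by (simp add: finsupp_on_def)
  with c show ?thesis unfolding id_minus_shift_def by (rule finsupp_on_diff)
qed

lemma shift_invariant_eq_etens:
  assumes c: "c \<in> finsupp_on (seqs e)" and inv: "\<And>w. shift c w = c w"
  shows "c = (\<lambda>w. c (\<lambda>_. e) * etens e w)"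
proof -
  have off_const: "c w = 0" if ne: "w \<noteq> (\<lambda>_. e)" for w
  proof (cases "w \<in> seqs e")
    case False
    then show ?thesis using c by (auto simp: finsupp_on_def)
  next
    case True
    obtain u n where u: "normal_seq e u" and w: "w = seq_shift n u"
      using seqs_eq_seq_shift_normal[OF True ne] .
    have "c (seq_shift j u) = c (seq_shift (j + 1) u)" for j
      using inv[of "seq_shift j u"] by (simp add: shift_apply seq_shift_seq_shift add.commute)
    then have "c (seq_shift n u) = 0"
      using finite_support_const_steps_zero[OF finite_orbit_support[OF c u]] by blast
    then show ?thesis using w by simp
  qed
  show ?thesis
  proof
    fix w
    show "c w = c (\<lambda>_. e) * etens e w"
      using off_const[of w] by (cases "w = (\<lambda>_. e)") (simp_all add: etens_eq_delta delta_def)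
  qed
qed

lemma ker_id_minus_shift:
  "{c \<in> finsupp_on (seqs e). \<forall>w. id_minus_shift c w = 0} = range (\<lambda>k w. k * etens e w)"
proof
  show "{c \<in> finsupp_on (seqs e). \<forall>w. id_minus_shift c w = 0} \<subseteq> range (\<lambda>k w. k * etens e w)"
  proof
    fix c assume "c \<in> {c \<in> finsupp_on (seqs e). \<forall>w. id_minus_shift c w = 0}"
    then have "c \<in> finsupp_on (seqs e)" "\<And>w. shift c w = c w"
      by (simp_all add: id_minus_shift_def)
    then have "c = (\<lambda>w. c (\<lambda>_. e) * etens e w)" by (rule shift_invariant_eq_etens)
    then show "c \<in> range (\<lambda>k w. k * etens e w)" by (rule range_eqI)
  qed
next
  have "etens e (seq_shift 1 w) = etens e w" for w
    by (simp add: etens_eq_delta delta_def seq_shift_eq_const_iff)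
  moreover have "(\<lambda>w. k * etens e w) \<in> finsupp_on (seqs e)" for k
    using etens_finsupp_on by (rule finsupp_on_smult)
  ultimately show "range (\<lambda>k w. k * etens e w) \<subseteq> {c \<in> finsupp_on (seqs e). \<forall>w. id_minus_shift c w = 0}"
    by (auto simp: id_minus_shift_def shift_apply)
qed

section \<open>The complement \<open>H(G,e)\<close>\<close>

lemma tens_support_normal:
  assumes x: "adm e x" "x 0 \<in> Gcheck e" "\<forall>i<0. x i = delta e" and w: "tens e x w \<noteq> 0"
  shows "normal_seq e w"
proof -
  have nz: "\<And>i. w i \<noteq> e \<or> x i \<noteq> delta e \<Longrightarrow> x i (w i) \<noteq> 0"
    using tens_nonzeroD(2)[OF x(1) w] by blast
  have "w i = e" if "i < 0" for i
    using nz[of i] x(3) that by (auto simp: delta_def)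
  moreover have "w 0 \<noteq> e"
  proof
    assume w0: "w 0 = e"
    have "x 0 e = 0" using x(2) by (rule Gcheck_vanishes_at_e)
    then have "x 0 \<noteq> delta e" by (auto simp: delta_def dest: fun_cong[where x = e])
    then show False using nz[of 0] w0 \<open>x 0 e = 0\<close> by simp
  qed
  ultimately show ?thesis using tens_nonzeroD(1)[OF x(1) w] by (simp add: normal_seq_def)
qed

lemma GcheckN_support_normal:
  assumes "h \<in> GcheckN e" "h w \<noteq> 0"
  shows "normal_seq e w"
proof -
  let ?T = "{h. \<forall>w. h w \<noteq> (0::int) \<longrightarrow> normal_seq e w}"
  have "GcheckN e \<subseteq> ?T"
    unfolding GcheckN_def
  proof (rule zspan_subset)
    show "(\<lambda>x. 0) \<in> ?T" by simp
  next
    fix s k g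
    assume "s \<in> {tens e x | x. adm e x \<and> x 0 \<in> Gcheck e \<and> (\<forall>i<0. x i = delta e)}" and g: "g \<in> ?T"
    then obtain x where x: "s = tens e x" "adm e x" "x 0 \<in> Gcheck e" "\<forall>i<0. x i = delta e"
      by blast
    have "normal_seq e w" if "k * s w + g w \<noteq> 0" for w
    proof (cases "s w = 0")
      case True
      with that g show ?thesis by simp
    next
      case False
      with x show ?thesis using tens_support_normal[OF x(2-4)] by simp
    qed
    then show "(\<lambda>w. k * s w + g w) \<in> ?T" by simp
  qed
  from subsetD[OF this assms(1)] assms(2) show ?thesis by simp
qed

lemma Hset_support:
  assumes "h \<in> Hset e" "h w \<noteq> 0"
  shows "w = (\<lambda>_. e) \<or> normal_seq e w"
proof -
  from assms(1) obtain k g where h: "h = (\<lambda>w. k * etens e w + g w)" and g: "g \<in> GcheckN e"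
    unfolding Hset_def by blast
  show ?thesis
  proof (cases "w = (\<lambda>_. e)")
    case False
    then have "etens e w = 0" by (simp add: etens_eq_delta delta_def)
    then have "g w \<noteq> 0" using assms(2) h by simp
    with g show ?thesis by (simp add: GcheckN_support_normal)
  qed simp
qed

lemma GcheckN_subset_finsupp_on: "GcheckN e \<subseteq> finsupp_on (seqs e)"
proof -
  have "GcheckN e \<subseteq> TZ e" unfolding GcheckN_def TZ_def by (rule zspan_mono) blast
  then show ?thesis by (simp add: TZ_eq_finsupp_on)
qed

lemma Hset_subset_finsupp_on: "Hset e \<subseteq> finsupp_on (seqs e)"
proof
  fix h assume "h \<in> Hset e"
  then obtain k g where h: "h = (\<lambda>w. k * etens e w + g w)" and g: "g \<in> GcheckN e"
    unfolding Hset_def by blast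
  have "g \<in> finsupp_on (seqs e)" using GcheckN_subset_finsupp_on g by (rule subsetD)
  then show "h \<in> finsupp_on (seqs e)"
    unfolding h by (intro finsupp_on_add finsupp_on_smult etens_finsupp_on)
qed

lemma Hset_lincomb:
  assumes "f \<in> Hset e" "g \<in> Hset e"
  shows "(\<lambda>w. k * f w + g w) \<in> Hset e"
proof -
  from assms(1) obtain k1 h1 where f: "f = (\<lambda>w. k1 * etens e w + h1 w)" "h1 \<in> GcheckN e"
    unfolding Hset_def by blast
  from assms(2) obtain k2 h2 where g: "g = (\<lambda>w. k2 * etens e w + h2 w)" "h2 \<in> GcheckN e"
    unfolding Hset_def by blast
  have "(\<lambda>w. k * h1 w + h2 w) \<in> GcheckN e"
    using f(2) g(2) unfolding GcheckN_def by (intro zspan_add zspan_smult)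
  moreover have "(\<lambda>w. k * f w + g w) = (\<lambda>w. (k * k1 + k2) * etens e w + (k * h1 w + h2 w))"
    unfolding f(1) g(1) by (simp add: algebra_simps)
  ultimately show ?thesis
    unfolding Hset_def by (intro CollectI exI[of _ "k * k1 + k2"] exI[of _ "\<lambda>w. k * h1 w + h2 w"]) simp
qed

lemma Hset_zero: "(\<lambda>w. 0) \<in> Hset e"
  unfolding Hset_def
  by (intro CollectI exI[of _ 0] exI[of _ "\<lambda>w. 0"]) (simp add: GcheckN_def zspan_zero)

lemma etens_Hset: "etens e \<in> Hset e"
  unfolding Hset_def
  by (intro CollectI exI[of _ 1] exI[of _ "\<lambda>w. 0"]) (simp add: GcheckN_def zspan_zero)

lemma delta_normal_Hset:
  assumes u: "normal_seq e u"
  shows "delta u \<in> Hset e"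
proof -
  have us: "u \<in> seqs e" using u by (simp add: normal_seq_def)
  have "delta (u 0) \<in> Gcheck e"
    unfolding Gcheck_def by (rule zspan_superset) (use u in \<open>auto simp: normal_seq_def\<close>)
  moreover have "\<forall>i<0. delta (u i) = delta e" using u by (simp add: normal_seq_def)
  ultimately have "delta u \<in> GcheckN e"
    unfolding GcheckN_def tens_delta[OF us, symmetric]
    by (intro zspan_superset CollectI exI[of _ "\<lambda>i. delta (u i)"]) (simp add: delta_seqs_adm[OF us])
  then show ?thesis unfolding Hset_def by (intro CollectI exI[of _ 0] exI[of _ "delta u"]) simp
qed

lemma delta_seq_shift_cong:
  assumes v: "v \<in> seqs e"
  shows "\<exists>d\<in>finsupp_on (seqs e). delta (seq_shift n v) = (\<lambda>w. id_minus_shift d w + delta v w)"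
proof (induction n rule: int_induct[where k = 0])
  case base
  show ?case using finsupp_on_zero by (intro bexI[of _ "\<lambda>w. 0"]) (simp_all add: id_minus_shift_zero)
next
  case (step1 i)
  then obtain d where d: "d \<in> finsupp_on (seqs e)"
    and eq: "delta (seq_shift i v) = (\<lambda>w. id_minus_shift d w + delta v w)" by blast
  let ?v = "seq_shift (i + 1) v"
  have "delta ?v = (\<lambda>w. id_minus_shift (\<lambda>w. delta ?v w + d w) w + delta v w)"
    using eq by (simp add: id_minus_shift_add id_minus_shift_delta seq_shift_seq_shift fun_eq_iff)
  moreover have "(\<lambda>w. delta ?v w + d w) \<in> finsupp_on (seqs e)"
    using v d by (intro finsupp_on_add delta_finsupp_on seq_shift_in_seqs)
  ultimately show ?case by blast
next
  case (step2 i)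
  then obtain d where d: "d \<in> finsupp_on (seqs e)"
    and eq: "delta (seq_shift i v) = (\<lambda>w. id_minus_shift d w + delta v w)" by blast
  let ?v = "seq_shift i v"
  have "delta (seq_shift (i - 1) v) w
      = id_minus_shift d w + delta v w - id_minus_shift (delta ?v) w" for w
    using fun_cong[OF eq, of w] by (simp add: id_minus_shift_delta seq_shift_seq_shift)
  then have "delta (seq_shift (i - 1) v) = (\<lambda>w. id_minus_shift (\<lambda>w. d w - delta ?v w) w + delta v w)"
    by (simp add: id_minus_shift_diff fun_eq_iff)
  moreover have "(\<lambda>w. d w - delta ?v w) \<in> finsupp_on (seqs e)"
    using v d by (intro finsupp_on_diff delta_finsupp_on seq_shift_in_seqs)
  ultimately show ?case by blast
qed

definition image_plus_Hset :: "'e \<Rightarrow> ((int \<Rightarrow> 'e) \<Rightarrow> int) set" where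
  "image_plus_Hset e =
    {(\<lambda>w. d w + h w) | d h. d \<in> id_minus_shift ` finsupp_on (seqs e) \<and> h \<in> Hset e}"

lemma image_plus_HsetI:
  "d \<in> finsupp_on (seqs e) \<Longrightarrow> h \<in> Hset e \<Longrightarrow> (\<lambda>w. id_minus_shift d w + h w) \<in> image_plus_Hset e"
  unfolding image_plus_Hset_def
  by (intro CollectI exI[of _ "id_minus_shift d"] exI[of _ h] conjI imageI refl)

lemma image_plus_HsetE:
  assumes "f \<in> image_plus_Hset e"
  obtains d h where "d \<in> finsupp_on (seqs e)" "h \<in> Hset e" "f = (\<lambda>w. id_minus_shift d w + h w)"
  using assms unfolding image_plus_Hset_def by blast

lemma image_plus_Hset_lincomb:
  assumes "f \<in> image_plus_Hset e" "g \<in> image_plus_Hset e"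
  shows "(\<lambda>w. k * f w + g w) \<in> image_plus_Hset e"
proof -
  obtain d1 h1 where d1: "d1 \<in> finsupp_on (seqs e)" and h1: "h1 \<in> Hset e"
    and f: "f = (\<lambda>w. id_minus_shift d1 w + h1 w)"
    using assms(1) by (rule image_plus_HsetE)
  obtain d2 h2 where d2: "d2 \<in> finsupp_on (seqs e)" and h2: "h2 \<in> Hset e"
    and g: "g = (\<lambda>w. id_minus_shift d2 w + h2 w)"
    using assms(2) by (rule image_plus_HsetE)
  have "(\<lambda>w. k * f w + g w)
      = (\<lambda>w. id_minus_shift (\<lambda>w. k * d1 w + d2 w) w + (k * h1 w + h2 w))"
    unfolding f g by (simp add: id_minus_shift_add id_minus_shift_smult algebra_simps)
  moreover have "(\<lambda>w. k * d1 w + d2 w) \<in> finsupp_on (seqs e)"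
    using d1 d2 by (intro finsupp_on_add finsupp_on_smult)
  moreover have "(\<lambda>w. k * h1 w + h2 w) \<in> Hset e"
    using h1 h2 by (rule Hset_lincomb)
  ultimately show ?thesis by (simp only: image_plus_HsetI)
qed

lemma delta_image_plus_Hset:
  assumes v: "v \<in> seqs e"
  shows "delta v \<in> image_plus_Hset e"
proof (cases "v = (\<lambda>_. e)")
  case True
  have "delta v = (\<lambda>w. id_minus_shift (\<lambda>w. 0) w + etens e w)"
    using True by (simp add: id_minus_shift_zero etens_eq_delta)
  then show ?thesis using image_plus_HsetI[OF finsupp_on_zero etens_Hset] by simp
next
  case False
  obtain u n where u: "normal_seq e u" and v_eq: "v = seq_shift n u"
    using seqs_eq_seq_shift_normal[OF v False] .
  have "u \<in> seqs e" using u by (simp add: normal_seq_def)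
  from delta_seq_shift_cong[OF this, of n] obtain d where d: "d \<in> finsupp_on (seqs e)"
    and eq: "delta (seq_shift n u) = (\<lambda>w. id_minus_shift d w + delta u w)"
    by (elim bexE)
  show ?thesis unfolding v_eq eq by (rule image_plus_HsetI[OF d delta_normal_Hset[OF u]])
qed

lemma image_plus_Hset_eq_finsupp_on: "image_plus_Hset e = finsupp_on (seqs e)"
proof
  show "image_plus_Hset e \<subseteq> finsupp_on (seqs e)"
  proof
    fix f assume "f \<in> image_plus_Hset e"
    then obtain d h where d: "d \<in> finsupp_on (seqs e)" and h: "h \<in> Hset e"
      and f: "f = (\<lambda>w. id_minus_shift d w + h w)"
      by (rule image_plus_HsetE)
    have "h \<in> finsupp_on (seqs e)" using Hset_subset_finsupp_on h by (rule subsetD)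
    with d show "f \<in> finsupp_on (seqs e)"
      unfolding f by (intro finsupp_on_add id_minus_shift_finsupp_on)
  qed
next
  have "zspan (delta ` seqs e) \<subseteq> image_plus_Hset e"
  proof (rule zspan_subset)
    show "(\<lambda>x. 0) \<in> image_plus_Hset e"
      using image_plus_HsetI[OF finsupp_on_zero Hset_zero] by (simp add: id_minus_shift_zero)
  next
    fix s k g assume s: "s \<in> delta ` seqs e" and g: "g \<in> image_plus_Hset e"
    from s obtain v where "v \<in> seqs e" and s_eq: "s = delta v" by (elim imageE)
    then have "s \<in> image_plus_Hset e" by (simp add: delta_image_plus_Hset)
    then show "(\<lambda>x. k * s x + g x) \<in> image_plus_Hset e" using g by (rule image_plus_Hset_lincomb)
  qed
  with finsupp_on_subset_zspan_delta show "finsupp_on (seqs e) \<subseteq> image_plus_Hset e"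
    by (rule order_trans)
qed

text \<open>Along a free orbit \<open>d\<close> becomes a finitely supported function on \<open>\<int>\<close>; a boundary in \<open>H\<close>
  vanishes off the normal sequence, so the forward difference of that function vanishes off
  \<open>0\<close>.\<close>
lemma id_minus_shift_Hset_eq_zero:
  assumes d: "d \<in> finsupp_on (seqs e)" and H: "id_minus_shift d \<in> Hset e"
  shows "id_minus_shift d = (\<lambda>w. 0)"
proof -
  have off_normal: "id_minus_shift d w = 0" if "\<not> normal_seq e w" for w
  proof (cases "w = (\<lambda>_. e)")
    case True
    then show ?thesis by (simp add: id_minus_shift_def shift_apply seq_shift_def)
  next
    case False
    then show ?thesis using Hset_support[OF H, of w] that by auto
  qed
  have at_normal: "id_minus_shift d u = 0" if u: "normal_seq e u" for u
  proof -
    have "d (seq_shift j u) = d (seq_shift (j + 1) u)" if "j \<noteq> 0" for j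
    proof -
      have "\<not> normal_seq e (seq_shift j u)" using normal_seq_seq_shift_imp_0[OF u] that by blast
      then show ?thesis using off_normal id_minus_shift_seq_shift[of d j u] by simp
    qed
    then have orbit_zero: "d (seq_shift j u) = 0" for j
      using finite_support_const_steps_zero[OF finite_orbit_support[OF d u]] by blast
    show ?thesis using id_minus_shift_seq_shift[of d 0 u] orbit_zero[of 0] orbit_zero[of 1] by simp
  qed
  show ?thesis
  proof
    fix w show "id_minus_shift d w = 0" by (cases "normal_seq e w") (simp_all add: at_normal off_normal)
  qed
qed

lemma image_id_minus_shift_Int_Hset: "id_minus_shift ` finsupp_on (seqs e) \<inter> Hset e = {\<lambda>w. 0}"
proof
  show "id_minus_shift ` finsupp_on (seqs e) \<inter> Hset e \<subseteq> {\<lambda>w. 0}"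
  proof
    fix f assume f: "f \<in> id_minus_shift ` finsupp_on (seqs e) \<inter> Hset e"
    then obtain d where d: "d \<in> finsupp_on (seqs e)" and f_eq: "f = id_minus_shift d" by blast
    with f have "id_minus_shift d \<in> Hset e" by simp
    with d have "id_minus_shift d = (\<lambda>w. 0)" by (rule id_minus_shift_Hset_eq_zero)
    with f_eq show "f \<in> {\<lambda>w. 0}" by simp
  qed
next
  have "(\<lambda>w. 0) \<in> id_minus_shift ` finsupp_on (seqs e)"
    using id_minus_shift_zero[symmetric] finsupp_on_zero by (rule image_eqI)
  then show "{\<lambda>w. 0} \<subseteq> id_minus_shift ` finsupp_on (seqs e) \<inter> Hset e"
    using Hset_zero by simp
qed

theorem lemma3:
  fixes e :: 'e
  shows "{c \<in> TZ e. (\<forall>w. c w - shift c w = 0)} = range (\<lambda>k::int. (\<lambda>w. k * etens e w))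
    \<and> {(\<lambda>w. d w + h w) | d h. d \<in> (\<lambda>c w. c w - shift c w) ` TZ e \<and> h \<in> Hset e} = TZ e
    \<and> (\<lambda>c w. c w - shift c w) ` TZ e \<inter> Hset e = {(\<lambda>w. 0)}"
  using ker_id_minus_shift[of e] image_plus_Hset_eq_finsupp_on[of e]
    image_id_minus_shift_Int_Hset[of e]
  unfolding image_plus_Hset_def TZ_eq_finsupp_on id_minus_shift_def
  by simp

end
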